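(* Let $\mathbb{Z}_2$ be the two-element field regarded as a semiring. The generalised multiset monad $\mathbf{M}_{\mathbb{Z}_2}$ preserves the equation $x\cdot(y\cdot y)=y\cdot x$ for a binary operation symbol $\cdot$. Moreover, $\mathbf{M}_{\mathbb{Z}_2}$ is not relevant.
   Context: For a semiring $\mathbb S$, $\mathbf{M}_{\mathbb S}X$ is the set of finitely supported maps $\xi\colon X\to\mathbb S$ (written $\sum_x\xi(x)x$); $(\mathbf{M}_{\mathbb S}f)(\xi)(y)=\sum_{f(x)=y}\xi(x)$; $\eta(x)=1\cdot x$; $\mu(\sum_i s_i\sum_j t_{ij}x_{ij})=\sum_{i,j}s_it_{ij}x_{ij}$; monoidal structure $\psi(\xi_1,\xi_2)(x,y)=\xi_1(x)\xi_2(y)$. For a $\Sigma$-algebra $\mathcal A$ on $A$, $\widehat T\mathcal A$ has carrier $TA$ and operations $T\sigma_{\mathcal A}\circ\psi^{\mathrm{ar}(\sigma)}$; $T$ preserves an equation if $\widehat T\mathcal A$ satisfies it whenever $\mathcal A$ does. $T$ is relevant if $\psi_{A,B}\circ\langle T\pi_1,T\pi_2\rangle=\mathrm{id}_{T(A\times B)}$ for all $A,B$. *)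

theory Defs
  imports Main "HOL-Library.Z2"
begin

text \<open>Generalised multiset monad M_S over a semiring S: M_S X is the set of
  finitely supported maps X \<Rightarrow> S.  We represent elements as functions
  with finite support.\<close>

definition fsupp :: "('x \<Rightarrow> 's::zero) \<Rightarrow> bool" where
  "fsupp \<xi> \<longleftrightarrow> finite {x. \<xi> x \<noteq> 0}"

definition Mmap :: "('x \<Rightarrow> 'y) \<Rightarrow> ('x \<Rightarrow> 's::comm_monoid_add) \<Rightarrow> 'y \<Rightarrow> 's" where
  "Mmap f \<xi> y = (\<Sum>x \<in> {x. \<xi> x \<noteq> 0 \<and> f x = y}. \<xi> x)"

definition Mpsi :: "('x \<Rightarrow> 's::times) \<Rightarrow> ('y \<Rightarrow> 's) \<Rightarrow> 'x \<times> 'y \<Rightarrow> 's" where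
  "Mpsi \<xi>1 \<xi>2 = (\<lambda>(x, y). \<xi>1 x * \<xi>2 y)"

definition Mlift2 :: "('a \<Rightarrow> 'a \<Rightarrow> 'a) \<Rightarrow> ('a \<Rightarrow> 's::comm_semiring_1) \<Rightarrow> ('a \<Rightarrow> 's) \<Rightarrow> 'a \<Rightarrow> 's" where
  "Mlift2 m \<xi>1 \<xi>2 = Mmap (case_prod m) (Mpsi \<xi>1 \<xi>2)"

text \<open>Relevance condition of M_S at the pair of sets A = UNIV::'a, B = UNIV::'b.
  M_S is relevant iff this holds for all A, B.\<close>
definition M_relevant_at :: "'s::comm_semiring_1 itself \<Rightarrow> 'a itself \<Rightarrow> 'b itself \<Rightarrow> bool" where
  "M_relevant_at _ _ _ \<longleftrightarrow>
     (\<forall>\<zeta> :: 'a \<times> 'b \<Rightarrow> 's. fsupp \<zeta> \<longrightarrow> Mpsi (Mmap fst \<zeta>) (Mmap snd \<zeta>) = \<zeta>)"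

end

theory Submission
  imports Defs
begin

text \<open>The equation forces the operation itself to be commutative, so in \<open>\<widehat>M A\<close> the
  product \<open>\<xi>\<^sub>2 \<cdot> \<xi>\<^sub>2\<close> is a double sum whose off-diagonal terms
  \<open>\<xi>\<^sub>2 a \<xi>\<^sub>2 b (ab)\<close> and \<open>\<xi>\<^sub>2 b \<xi>\<^sub>2 a (ba)\<close> coincide; over \<open>\<int>\<^sub>2\<close> they cancel, leaving
  \<open>\<Sum>\<^sub>a \<xi>\<^sub>2 a (aa)\<close> since \<open>s\<^sup>2 = s\<close>.  The equation then holds termwise.
  Relevance fails already for \<open>\<zeta> = (0,0) + (1,1)\<close>, whose marginals multiply back to
  \<open>(0,0) + (0,1) + (1,0) + (1,1)\<close>.\<close>

lemma commutative_if_mult_square_eq: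
  assumes eq: "\<And>x y. m x (m y y) = m y x"
  shows "m x y = m y x"
proof -
  have idem: "m (m y y) (m y y) = m y y" for y
    using eq by metis
  have "m x (m y y) = m (m y y) x" for x y
    using eq[of x "m y y"] idem by simp
  then show ?thesis
    using eq by metis
qed

lemma Mmap_eq_sum:
  assumes "finite A" "{x. \<xi> x \<noteq> 0} \<subseteq> A"
  shows "Mmap f \<xi> y = (\<Sum>x\<in>A. of_bool (f x = y) * (\<xi> x :: 's::comm_semiring_1))"
proof -
  have "Mmap f \<xi> y = (\<Sum>x\<in>{x\<in>A. f x = y}. \<xi> x)"
    unfolding Mmap_def by (rule sum.mono_neutral_left) (use assms in auto)
  also have "\<dots> = (\<Sum>x\<in>A. if f x = y then \<xi> x else 0)"
    using assms(1) by (rule sum.inter_filter)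
  also have "\<dots> = (\<Sum>x\<in>A. of_bool (f x = y) * \<xi> x)"
    by (rule sum.cong) auto
  finally show ?thesis .
qed

lemma Mlift2_eq_sum:
  assumes "finite A" "{x. \<xi>1 x \<noteq> 0} \<subseteq> A" "finite B" "{x. \<xi>2 x \<noteq> 0} \<subseteq> B"
  shows "Mlift2 m \<xi>1 \<xi>2 z =
    (\<Sum>a\<in>A. \<Sum>b\<in>B. of_bool (m a b = z) * (\<xi>1 a * (\<xi>2 b :: 's::comm_semiring_1)))"
proof -
  have "{p. Mpsi \<xi>1 \<xi>2 p \<noteq> 0} \<subseteq> A \<times> B"
    using assms by (auto simp: Mpsi_def)
  then have "Mlift2 m \<xi>1 \<xi>2 z = (\<Sum>p\<in>A \<times> B. of_bool (case_prod m p = z) * Mpsi \<xi>1 \<xi>2 p)"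
    unfolding Mlift2_def using assms by (intro Mmap_eq_sum) auto
  also have "\<dots> = (\<Sum>(a, b)\<in>A \<times> B. of_bool (m a b = z) * (\<xi>1 a * \<xi>2 b))"
    by (rule sum.cong) (auto simp: Mpsi_def)
  finally show ?thesis
    by (simp only: sum.cartesian_product)
qed

lemma Mlift2_support:
  "{z. Mlift2 m \<xi>1 \<xi>2 z \<noteq> 0} \<subseteq> case_prod m ` ({x. \<xi>1 x \<noteq> 0} \<times> {x. \<xi>2 x \<noteq> 0})"
proof
  fix z
  assume "z \<in> {z. Mlift2 m \<xi>1 \<xi>2 z \<noteq> 0}"
  then have "Mmap (case_prod m) (Mpsi \<xi>1 \<xi>2) z \<noteq> 0"
    by (simp add: Mlift2_def)
  then have "{p. Mpsi \<xi>1 \<xi>2 p \<noteq> 0 \<and> case_prod m p = z} \<noteq> {}"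
    unfolding Mmap_def by (metis sum.empty)
  then obtain a b where "Mpsi \<xi>1 \<xi>2 (a, b) \<noteq> 0" "m a b = z"
    by auto
  then show "z \<in> case_prod m ` ({x. \<xi>1 x \<noteq> 0} \<times> {x. \<xi>2 x \<noteq> 0})"
    by (auto simp: Mpsi_def intro!: image_eqI[of _ _ "(a, b)"])
qed

lemma Mlift2_Mlift2_right_eq_sum:
  fixes \<xi>1 \<xi>2 \<xi>3 :: "'a \<Rightarrow> 's::comm_semiring_1"
  assumes "finite S" "{x. \<xi>1 x \<noteq> 0} \<subseteq> S"
    and "finite T" "{x. \<xi>2 x \<noteq> 0} \<subseteq> T"
    and "finite U" "{x. \<xi>3 x \<noteq> 0} \<subseteq> U"
  shows "Mlift2 m \<xi>1 (Mlift2 m \<xi>2 \<xi>3) z =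
    (\<Sum>x\<in>S. \<Sum>a\<in>T. \<Sum>b\<in>U. of_bool (m x (m a b) = z) * (\<xi>1 x * (\<xi>2 a * \<xi>3 b)))"
proof -
  define W where "W = case_prod m ` (T \<times> U)"
  have "finite W"
    using assms by (simp add: W_def)
  have "{w. Mlift2 m \<xi>2 \<xi>3 w \<noteq> 0} \<subseteq> W"
    using Mlift2_support[of m \<xi>2 \<xi>3] assms unfolding W_def by blast
  have inner: "Mlift2 m \<xi>2 \<xi>3 w = (\<Sum>a\<in>T. \<Sum>b\<in>U. of_bool (m a b = w) * (\<xi>2 a * \<xi>3 b))" for w
    using assms by (intro Mlift2_eq_sum) auto
  have delta: "(\<Sum>w\<in>W. of_bool (m x w = z) * of_bool (m a b = w)) = (of_bool (m x (m a b) = z) :: 's)"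
    if "a \<in> T" "b \<in> U" for x a b
  proof -
    have "(\<Sum>w\<in>W. of_bool (m x w = z) * of_bool (m a b = w)) =
          (\<Sum>w\<in>W. if m a b = w then (of_bool (m x (m a b) = z) :: 's) else 0)"
      by (rule sum.cong) auto
    moreover have "m a b \<in> W"
      using that by (auto simp: W_def)
    ultimately show ?thesis
      using \<open>finite W\<close> by simp
  qed
  have "Mlift2 m \<xi>1 (Mlift2 m \<xi>2 \<xi>3) z =
      (\<Sum>x\<in>S. \<Sum>w\<in>W. of_bool (m x w = z) * (\<xi>1 x * Mlift2 m \<xi>2 \<xi>3 w))"
    using assms \<open>finite W\<close> \<open>{w. Mlift2 m \<xi>2 \<xi>3 w \<noteq> 0} \<subseteq> W\<close> by (intro Mlift2_eq_sum)
  also have "\<dots> = (\<Sum>x\<in>S. \<Sum>w\<in>W. \<Sum>a\<in>T. \<Sum>b\<in>U.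
      \<xi>1 x * (\<xi>2 a * \<xi>3 b) * (of_bool (m x w = z) * of_bool (m a b = w)))"
    unfolding inner by (simp add: sum_distrib_left mult_ac)
  also have "\<dots> = (\<Sum>x\<in>S. \<Sum>a\<in>T. \<Sum>b\<in>U.
      \<xi>1 x * (\<xi>2 a * \<xi>3 b) * (\<Sum>w\<in>W. of_bool (m x w = z) * of_bool (m a b = w)))"
    by (simp only: sum_distrib_left sum.swap[where A = W])
  also have "\<dots> = (\<Sum>x\<in>S. \<Sum>a\<in>T. \<Sum>b\<in>U. of_bool (m x (m a b) = z) * (\<xi>1 x * (\<xi>2 a * \<xi>3 b)))"
    by (intro sum.cong refl) (simp add: delta mult.commute)
  finally show ?thesis .
qed

lemma bit_add_self: "(a::bit) + a = 0"
  by (metis bit_2_eq_0 mult_2 mult_zero_left)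

lemma bit_mult_self: "(a::bit) * a = a"
  by (cases a) auto

lemma sum_symmetric_bit_diagonal:
  assumes "finite T" "\<And>a b. g a b = g b a"
  shows "(\<Sum>a\<in>T. \<Sum>b\<in>T. g a b) = (\<Sum>a\<in>T. g a a :: bit)"
  using assms(1)
proof (induction T rule: finite_induct)
  case empty
  then show ?case by simp
next
  case (insert t T)
  define row where "row = (\<Sum>b\<in>T. g t b)"
  define rest where "rest = (\<Sum>a\<in>T. \<Sum>b\<in>T. g a b)"
  have column: "(\<Sum>a\<in>T. g a t) = row"
    using assms(2) by (simp add: row_def)
  have "(\<Sum>a\<in>insert t T. \<Sum>b\<in>insert t T. g a b) = g t t + (row + row) + rest"
    unfolding row_def rest_def sum.insert[OF insert(1,2)] sum.distrib column[unfolded row_def]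
    by (simp only: add_ac)
  also have "\<dots> = (\<Sum>a\<in>insert t T. g a a)"
    by (simp only: bit_add_self add_0_right sum.insert[OF insert(1,2)] rest_def insert(3))
  finally show ?case .
qed

lemma M_bit_preserves_mult_square_eq:
  fixes m :: "'a \<Rightarrow> 'a \<Rightarrow> 'a" and \<xi>1 \<xi>2 :: "'a \<Rightarrow> bit"
  assumes eq: "\<And>x y. m x (m y y) = m y x"
    and "fsupp \<xi>1" "fsupp \<xi>2"
  shows "Mlift2 m \<xi>1 (Mlift2 m \<xi>2 \<xi>2) = Mlift2 m \<xi>2 \<xi>1"
proof
  fix z
  define S where "S = {x. \<xi>1 x \<noteq> 0}"
  define T where "T = {x. \<xi>2 x \<noteq> 0}"
  have "finite S" "finite T"
    using assms by (auto simp: fsupp_def S_def T_def)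
  have "Mlift2 m \<xi>1 (Mlift2 m \<xi>2 \<xi>2) z =
      (\<Sum>x\<in>S. \<Sum>a\<in>T. \<Sum>b\<in>T. of_bool (m x (m a b) = z) * (\<xi>1 x * (\<xi>2 a * \<xi>2 b)))"
    using \<open>finite S\<close> \<open>finite T\<close> by (intro Mlift2_Mlift2_right_eq_sum) (auto simp: S_def T_def)
  also have "\<dots> = (\<Sum>x\<in>S. \<Sum>a\<in>T. of_bool (m x (m a a) = z) * (\<xi>1 x * (\<xi>2 a * \<xi>2 a)))"
  proof (rule sum.cong[OF refl])
    fix x
    have "m a b = m b a" for a b
      using commutative_if_mult_square_eq eq by metis
    then have symmetric: "of_bool (m x (m a b) = z) * (\<xi>1 x * (\<xi>2 a * \<xi>2 b)) =
        of_bool (m x (m b a) = z) * (\<xi>1 x * (\<xi>2 b * \<xi>2 a))" for a b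
      by (simp only: mult.commute[of "\<xi>2 a"])
    show "(\<Sum>a\<in>T. \<Sum>b\<in>T. of_bool (m x (m a b) = z) * (\<xi>1 x * (\<xi>2 a * \<xi>2 b))) =
        (\<Sum>a\<in>T. of_bool (m x (m a a) = z) * (\<xi>1 x * (\<xi>2 a * \<xi>2 a)))"
      using \<open>finite T\<close> symmetric by (rule sum_symmetric_bit_diagonal)
  qed
  also have "\<dots> = (\<Sum>a\<in>T. \<Sum>x\<in>S. of_bool (m a x = z) * (\<xi>2 a * \<xi>1 x))"
    by (subst sum.swap) (simp add: eq bit_mult_self mult_ac conj_ac)
  also have "\<dots> = Mlift2 m \<xi>2 \<xi>1 z"
    using \<open>finite S\<close> \<open>finite T\<close> by (intro Mlift2_eq_sum[symmetric]) (auto simp: S_def T_def)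
  finally show "Mlift2 m \<xi>1 (Mlift2 m \<xi>2 \<xi>2) z = Mlift2 m \<xi>2 \<xi>1 z" .
qed

lemma not_M_relevant_at_nat: "\<not> M_relevant_at TYPE('s::comm_semiring_1) TYPE(nat) TYPE(nat)"
proof
  define \<zeta> :: "nat \<times> nat \<Rightarrow> 's" where "\<zeta> = (\<lambda>p. of_bool (p \<in> {(0, 0), (1, 1)}))"
  assume "M_relevant_at TYPE('s) TYPE(nat) TYPE(nat)"
  moreover have "fsupp \<zeta>"
    unfolding fsupp_def \<zeta>_def by (rule finite_subset[of _ "{(0, 0), (1, 1)}"]) auto
  ultimately have marginals: "Mpsi (Mmap fst \<zeta>) (Mmap snd \<zeta>) = \<zeta>"
    unfolding M_relevant_at_def by blast
  have "{p. \<zeta> p \<noteq> 0 \<and> fst p = 0} = {(0, 0)}" "{p. \<zeta> p \<noteq> 0 \<and> snd p = 1} = {(1, 1)}"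
    by (auto simp: \<zeta>_def)
  then have "Mmap fst \<zeta> 0 = 1" "Mmap snd \<zeta> 1 = 1"
    by (simp_all add: Mmap_def \<zeta>_def)
  then have "Mpsi (Mmap fst \<zeta>) (Mmap snd \<zeta>) (0, 1) = 1"
    by (simp add: Mpsi_def)
  then show False
    using marginals by (simp add: \<zeta>_def)
qed

theorem proposition5:
  shows "(\<forall>(m :: 'a \<Rightarrow> 'a \<Rightarrow> 'a).
            (\<forall>x y. m x (m y y) = m y x) \<longrightarrow>
            (\<forall>\<xi>1 \<xi>2 :: 'a \<Rightarrow> bit. fsupp \<xi>1 \<longrightarrow> fsupp \<xi>2 \<longrightarrow>
               Mlift2 m \<xi>1 (Mlift2 m \<xi>2 \<xi>2) = Mlift2 m \<xi>2 \<xi>1))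
         \<and> \<not> M_relevant_at TYPE(bit) TYPE(nat) TYPE(nat)"
  using M_bit_preserves_mult_square_eq not_M_relevant_at_nat by blast

end
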